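(* Let $\mathcal{G}=(\mathcal{V},\mathcal{E})$ be a $4$-connected grid graph and consider a labeled multi-robot path planning instance on $\mathcal{G}$ with $n$ robots, distinct start vertices $s_1,\dots,s_n$ and distinct goal vertices $g_1,\dots,g_n$. Let $1\le w_1< w_2$ be suboptimality factors. Then the algorithm DCBS (described in the context) with parameters $w_1,w_2$ is complete and $w_2$ bounded-suboptimal: whenever the instance admits a collision-free solution, DCBS terminates and returns a collision-free solution whose sum-of-costs is at most $w_2$ times the minimum sum-of-costs over all collision-free solutions.
   Context: A path for robot $r_i$ is a sequence $P_i=(p_i^0,\dots,p_i^T)$ of vertices with $p_i^0=s_i$, $p_i^T=g_i$, and for each $1\le t\le T$ either $p_i^{t}=p_i^{t-1}$ or $p_i^{t}$ is a grid neighbor of $p_i^{t-1}$ (neighbors of $(i,j)$ are $(i\pm1,j),(i,j\pm1)$ when they lie in $\mathcal{V}$). A set of paths is collision-free if for all $t$ and $i\neq j$: $p_i^t\neq p_j^t$ (no vertex collision) and $(p_i^{t-1},p_i^t)\neq(p_j^t,p_j^{t-1})$ (no edge collision). The sum-of-costs is $\sum_i t_i$ where $t_i$ is the least time after which robot $i$ stays at $g_i$. ECBS($w_1$) (enhanced conflict-based search) is a two-level search. High-level nodes consist of a set of constraints (a constraint forbids a given robot from occupying a given vertex or traversing a given edge at a given time), a path for each robot consistent with its constraints, the sum-of-costs of these paths, and a lower bound $LB$ on the optimal sum-of-costs under the node's constraints. The high level maintains an OPEN list and a FOCAL list consisting of the OPEN nodes whose cost is at most $w_1$ times the minimum lower bound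 among OPEN nodes; it repeatedly removes from FOCAL the node with fewest pairwise collisions. If that node's paths are collision-free they are returned; otherwise a first collision between two robots is chosen and, for each of the two robots, a child node is created by adding a constraint forbidding that robot's part of the collision and replanning that robot's path with a low-level focal search (also with factor $w_1$); successful children are inserted into OPEN. ECBS($w_1$) is complete and returns solutions with sum-of-costs at most $w_1$ times optimal. DCBS($w_1,w_2$) is ECBS($w_1$) with the following addition: after a high-level node $N$ is popped from FOCAL and removed from OPEN, if a triggering predicate on $N$ holds (e.g., the number of collisions of $N$ is below a threshold, or has stagnated), a subroutine DbResolution takes the paths of $N$ and attempts to remove all collisions by local rerouting of conflicting robots inside $2\times3$ or $3\times3$ subgrids using a precomputed database of minimum-makespan solutions for such subproblems; if DbResolution succeeds and the resulting collision-free solution passes an optimality check with factor $w_2$ (its cost is at most $w_2$ times the lower bound), it is returned; otherwise the ordinary ECBS high-level expansion of $N$ proceeds. *)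

theory Defs
  imports Complex_Main "HOL-Library.Multiset"
begin

type_synonym vertex = "int \<times> int"
type_synonym path = "vertex list"

definition grid_adj :: "vertex \<Rightarrow> vertex \<Rightarrow> bool" where
  "grid_adj u v \<longleftrightarrow> \<bar>fst u - fst v\<bar> + \<bar>snd u - snd v\<bar> = 1"

text \<open>Position of a robot at time t; after the end of its list it stays at the last
  vertex (equivalent to padding all paths to a common horizon T).\<close>
definition pos :: "path \<Rightarrow> nat \<Rightarrow> vertex" where
  "pos p t = p ! min t (length p - 1)"

definition valid_path :: "vertex set \<Rightarrow> vertex \<Rightarrow> vertex \<Rightarrow> path \<Rightarrow> bool" where
  "valid_path V s g p \<longleftrightarrow> p \<noteq> [] \<and> set p \<subseteq> V \<and> hd p = s \<and> last p = g \<and>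
     (\<forall>k. Suc k < length p \<longrightarrow> p ! Suc k = p ! k \<or> grid_adj (p ! k) (p ! Suc k))"

definition path_cost :: "vertex \<Rightarrow> path \<Rightarrow> nat" where
  "path_cost g p = (LEAST t. \<forall>t'\<ge>t. pos p t' = g)"

definition vertex_collision :: "(nat \<Rightarrow> path) \<Rightarrow> nat \<Rightarrow> nat \<Rightarrow> nat \<Rightarrow> bool" where
  "vertex_collision P i j t \<longleftrightarrow> pos (P i) t = pos (P j) t"

definition edge_collision :: "(nat \<Rightarrow> path) \<Rightarrow> nat \<Rightarrow> nat \<Rightarrow> nat \<Rightarrow> bool" where
  "edge_collision P i j t \<longleftrightarrow> 1 \<le> t \<and>
     pos (P i) (t - 1) = pos (P j) t \<and> pos (P i) t = pos (P j) (t - 1)"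

definition collision_free :: "nat \<Rightarrow> (nat \<Rightarrow> path) \<Rightarrow> bool" where
  "collision_free n P \<longleftrightarrow> (\<forall>i<n. \<forall>j<n. i \<noteq> j \<longrightarrow>
     (\<forall>t. \<not> vertex_collision P i j t \<and> \<not> edge_collision P i j t))"

definition is_solution :: "vertex set \<Rightarrow> nat \<Rightarrow> (nat \<Rightarrow> vertex) \<Rightarrow> (nat \<Rightarrow> vertex) \<Rightarrow> (nat \<Rightarrow> path) \<Rightarrow> bool" where
  "is_solution V n s g P \<longleftrightarrow> (\<forall>i<n. valid_path V (s i) (g i) (P i)) \<and> collision_free n P"

definition soc :: "nat \<Rightarrow> (nat \<Rightarrow> vertex) \<Rightarrow> (nat \<Rightarrow> path) \<Rightarrow> nat" where
  "soc n g P = (\<Sum>i<n. path_cost (g i) (P i))"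

definition opt_soc :: "vertex set \<Rightarrow> nat \<Rightarrow> (nat \<Rightarrow> vertex) \<Rightarrow> (nat \<Rightarrow> vertex) \<Rightarrow> nat" where
  "opt_soc V n s g = (LEAST c. \<exists>P. is_solution V n s g P \<and> soc n g P = c)"

text \<open>VCon r v t: robot r may not be at v at time t.
  ECon r u v t: robot r may not traverse u to v between times t-1 and t.\<close>
datatype constr = VCon nat vertex nat | ECon nat vertex vertex nat

fun satisfies :: "nat \<Rightarrow> path \<Rightarrow> constr \<Rightarrow> bool" where
  "satisfies i p (VCon r v t) \<longleftrightarrow> (r = i \<longrightarrow> pos p t \<noteq> v)"
| "satisfies i p (ECon r u v t) \<longleftrightarrow> (r = i \<longrightarrow> \<not> (pos p (t - 1) = u \<and> pos p t = v))"

definition consistent :: "nat \<Rightarrow> path \<Rightarrow> constr set \<Rightarrow> bool" where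
  "consistent i p C \<longleftrightarrow> (\<forall>c\<in>C. satisfies i p c)"

text \<open>Specification of the low-level focal search with factor w1 for robot i under
  constraints C: it returns a path p and its lower bound lb (f_min) with
  lb \<le> cost of every consistent path and cost p \<le> w1 * lb; it fails only if no
  consistent path exists.\<close>
definition ll_ok :: "vertex set \<Rightarrow> (nat \<Rightarrow> vertex) \<Rightarrow> (nat \<Rightarrow> vertex) \<Rightarrow> real \<Rightarrow> nat \<Rightarrow>
    constr set \<Rightarrow> path \<Rightarrow> real \<Rightarrow> bool" where
  "ll_ok V s g w1 i C p lb \<longleftrightarrow> valid_path V (s i) (g i) p \<and> consistent i p C \<and>
     (\<forall>q. valid_path V (s i) (g i) q \<and> consistent i q C \<longrightarrow> lb \<le> real (path_cost (g i) q)) \<and>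
     real (path_cost (g i) p) \<le> w1 * lb"

definition ll_no_path :: "vertex set \<Rightarrow> (nat \<Rightarrow> vertex) \<Rightarrow> (nat \<Rightarrow> vertex) \<Rightarrow> nat \<Rightarrow> constr set \<Rightarrow> bool" where
  "ll_no_path V s g i C \<longleftrightarrow> \<not> (\<exists>q. valid_path V (s i) (g i) q \<and> consistent i q C)"

datatype collision = VColl nat nat vertex nat | EColl nat nat vertex vertex nat

fun is_collision :: "nat \<Rightarrow> (nat \<Rightarrow> path) \<Rightarrow> collision \<Rightarrow> bool" where
  "is_collision n P (VColl i j v t) \<longleftrightarrow> i < n \<and> j < n \<and> i \<noteq> j \<and>
     pos (P i) t = v \<and> pos (P j) t = v"
| "is_collision n P (EColl i j u v t) \<longleftrightarrow> i < n \<and> j < n \<and> i \<noteq> j \<and> 1 \<le> t \<and>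
     pos (P i) (t - 1) = u \<and> pos (P i) t = v \<and> pos (P j) (t - 1) = v \<and> pos (P j) t = u"

fun coll_time :: "collision \<Rightarrow> nat" where
  "coll_time (VColl i j v t) = t"
| "coll_time (EColl i j u v t) = t"

definition first_collision :: "nat \<Rightarrow> (nat \<Rightarrow> path) \<Rightarrow> collision \<Rightarrow> bool" where
  "first_collision n P c \<longleftrightarrow> is_collision n P c \<and>
     (\<forall>c'. is_collision n P c' \<longrightarrow> coll_time c \<le> coll_time c')"

fun split_collision :: "collision \<Rightarrow> (nat \<times> constr) \<times> (nat \<times> constr)" where
  "split_collision (VColl i j v t) = ((i, VCon i v t), (j, VCon j v t))"
| "split_collision (EColl i j u v t) = ((i, ECon i u v t), (j, ECon j v u t))"

definition num_collisions :: "nat \<Rightarrow> (nat \<Rightarrow> path) \<Rightarrow> nat" where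
  "num_collisions n P = card {(i, j). i < j \<and> j < n \<and>
     (\<exists>t. vertex_collision P i j t \<or> edge_collision P i j t)}"

datatype node = Node (constrs: "constr set") (npaths: "nat \<Rightarrow> path") (nlbs: "nat \<Rightarrow> real")

definition node_cost :: "nat \<Rightarrow> (nat \<Rightarrow> vertex) \<Rightarrow> node \<Rightarrow> nat" where
  "node_cost n g N = soc n g (npaths N)"

definition node_lb :: "nat \<Rightarrow> node \<Rightarrow> real" where
  "node_lb n N = (\<Sum>i<n. nlbs N i)"

definition min_lb :: "nat \<Rightarrow> node multiset \<Rightarrow> real" where
  "min_lb n Op = Min (node_lb n ` set_mset Op)"

text \<open>N is a node of FOCAL with fewest collisions.\<close>
definition selected :: "nat \<Rightarrow> (nat \<Rightarrow> vertex) \<Rightarrow> real \<Rightarrow> node multiset \<Rightarrow> node \<Rightarrow> bool" where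
  "selected n g w1 Op N \<longleftrightarrow> N \<in># Op \<and> real (node_cost n g N) \<le> w1 * min_lb n Op \<and>
     (\<forall>N'\<in>#Op. real (node_cost n g N') \<le> w1 * min_lb n Op \<longrightarrow>
        num_collisions n (npaths N) \<le> num_collisions n (npaths N'))"

definition child_result :: "vertex set \<Rightarrow> (nat \<Rightarrow> vertex) \<Rightarrow> (nat \<Rightarrow> vertex) \<Rightarrow> real \<Rightarrow>
    node \<Rightarrow> nat \<times> constr \<Rightarrow> node option \<Rightarrow> bool" where
  "child_result V s g w1 N rc res \<longleftrightarrow>
     (let r = fst rc; C' = insert (snd rc) (constrs N) in
       (res = None \<and> ll_no_path V s g r C') \<or>
       (\<exists>p lb. ll_ok V s g w1 r C' p lb \<and>
          res = Some (Node C' ((npaths N)(r := p)) ((nlbs N)(r := lb)))))"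

definition mset_opt :: "'a option \<Rightarrow> 'a multiset" where
  "mset_opt x = (case x of None \<Rightarrow> {#} | Some a \<Rightarrow> {#a#})"

datatype config = Running "node multiset" | Returned "nat \<Rightarrow> path" | Failed

definition dcbs_init :: "vertex set \<Rightarrow> nat \<Rightarrow> (nat \<Rightarrow> vertex) \<Rightarrow> (nat \<Rightarrow> vertex) \<Rightarrow> real \<Rightarrow>
    config \<Rightarrow> bool" where
  "dcbs_init V n s g w1 c \<longleftrightarrow>
     (\<exists>P L. (\<forall>i<n. ll_ok V s g w1 i {} (P i) (L i)) \<and> c = Running {#Node {} P L#}) \<or>
     ((\<exists>i<n. ll_no_path V s g i {}) \<and> c = Failed)"

text \<open>The triggering predicate is arbitrary, so the
  DbResolution branch (db_return) may or may not be taken; db is DbResolution applied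
  to the paths of the popped node; its output is returned if collision-free and its
  cost is at most w2 times the lower bound (minimum LB over OPEN).\<close>
inductive dcbs_step :: "vertex set \<Rightarrow> nat \<Rightarrow> (nat \<Rightarrow> vertex) \<Rightarrow> (nat \<Rightarrow> vertex) \<Rightarrow> real \<Rightarrow> real \<Rightarrow>
    ((nat \<Rightarrow> path) \<Rightarrow> (nat \<Rightarrow> path) option) \<Rightarrow> config \<Rightarrow> config \<Rightarrow> bool"
  for V n s g w1 w2 db where
  db_return: "selected n g w1 Op N \<Longrightarrow> db (npaths N) = Some Q \<Longrightarrow> collision_free n Q \<Longrightarrow>
     real (soc n g Q) \<le> w2 * min_lb n Op \<Longrightarrow>
     dcbs_step V n s g w1 w2 db (Running Op) (Returned Q)"
| ecbs_return: "selected n g w1 Op N \<Longrightarrow> collision_free n (npaths N) \<Longrightarrow>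
     dcbs_step V n s g w1 w2 db (Running Op) (Returned (npaths N))"
| expand: "selected n g w1 Op N \<Longrightarrow> \<not> collision_free n (npaths N) \<Longrightarrow>
     first_collision n (npaths N) c \<Longrightarrow>
     child_result V s g w1 N (fst (split_collision c)) r1 \<Longrightarrow>
     child_result V s g w1 N (snd (split_collision c)) r2 \<Longrightarrow>
     dcbs_step V n s g w1 w2 db (Running Op) (Running (Op - {#N#} + mset_opt r1 + mset_opt r2))"
| fail: "dcbs_step V n s g w1 w2 db (Running {#}) Failed"

end

theory Submission
  imports Defs
begin

text \<open>
  Fix an optimal solution P. Every node in OPEN carries, for each robot, a path returned by a
  correct low-level search, and some node in OPEN has only constraints that P satisfies. The
  latter survives expansion because the collision-free P cannot violate both constraints
  generated by a collision. Hence the minimum lower bound over OPEN never exceeds the cost of P,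
  OPEN never becomes empty, and a returned solution costs at most w1 (ECBS return) or w2
  (DbResolution return) times the optimum.

  For termination: a node taken from FOCAL costs at most w1 times the optimum, so all its paths
  have reached their goals by the horizon \<open>\<lceil>w1 * opt\<rceil>\<close>, and since the goals are distinct, its
  first collision happens no later. So every constraint ever added lies in the finite set K of
  constraints up to the horizon, each child has exactly one more of them than its parent, and
  the sum over OPEN of \<open>3 ^ |K - constraints|\<close> decreases with every expansion.
\<close>

lemma pos_mem_set: "p \<noteq> [] \<Longrightarrow> pos p t \<in> set p"
  unfolding pos_def by (intro nth_mem) (cases p; auto)

lemma pos_eq_goal_if_cost_le:
  assumes "valid_path V s g p" and "path_cost g p \<le> t"
  shows "pos p t = g"
proof -
  have "\<forall>t'\<ge>length p - 1. pos p t' = g"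
    using assms(1) by (auto simp: valid_path_def pos_def last_conv_nth min_def)
  then have "\<forall>t'\<ge>path_cost g p. pos p t' = g"
    unfolding path_cost_def by (rule LeastI)
  with assms(2) show ?thesis by blast
qed

lemma opt_soc_attained:
  assumes "\<exists>P. is_solution V n s g P"
  shows "\<exists>P. is_solution V n s g P \<and> soc n g P = opt_soc V n s g"
  using LeastI_ex[of "\<lambda>c. \<exists>P. is_solution V n s g P \<and> soc n g P = c"] assms
  unfolding opt_soc_def by blast

lemma ll_ok_exists:
  assumes "1 \<le> w1" and "valid_path V (s i) (g i) q" and "consistent i q C"
  shows "\<exists>p lb. ll_ok V s g w1 i C p lb"
proof -
  obtain p where p: "valid_path V (s i) (g i) p \<and> consistent i p C"
    and p_min: "\<And>q. valid_path V (s i) (g i) q \<and> consistent i q C \<Longrightarrow>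
                  path_cost (g i) p \<le> path_cost (g i) q"
    using assms(2,3)
      ex_has_least_nat[of "\<lambda>q. valid_path V (s i) (g i) q \<and> consistent i q C" q "path_cost (g i)"]
    by blast
  have "real (path_cost (g i) p) \<le> w1 * real (path_cost (g i) p)"
    using assms(1) by (simp add: mult_le_cancel_right1)
  then have "ll_ok V s g w1 i C p (real (path_cost (g i) p))"
    unfolding ll_ok_def using p p_min by auto
  then show ?thesis by blast
qed

lemma ll_ok_insert_irrelevant:
  "ll_ok V s g w1 i C p lb \<Longrightarrow> (\<And>q. satisfies i q k) \<Longrightarrow> ll_ok V s g w1 i (insert k C) p lb"
  by (auto simp: ll_ok_def consistent_def)

section \<open>Collisions and the constraints resolving them\<close>

lemma first_collision_exists:
  assumes "\<not> collision_free n P"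
  shows "\<exists>c. first_collision n P c"
proof -
  obtain i j t where ij: "i < n" "j < n" "i \<noteq> j"
    and coll: "vertex_collision P i j t \<or> edge_collision P i j t"
    using assms by (auto simp: collision_free_def)
  have "\<exists>c. is_collision n P c"
  proof (cases "vertex_collision P i j t")
    case True
    then have "is_collision n P (VColl i j (pos (P i) t) t)"
      using ij by (simp add: vertex_collision_def)
    then show ?thesis ..
  next
    case False
    then have "is_collision n P (EColl i j (pos (P i) (t - 1)) (pos (P i) t) t)"
      using ij coll by (auto simp: edge_collision_def)
    then show ?thesis ..
  qed
  then obtain c0 where "is_collision n P c0" ..
  then show ?thesis
    using ex_has_least_nat[of "is_collision n P" c0 coll_time] by (auto simp: first_collision_def)
qed

definition collision_branches :: "collision \<Rightarrow> (nat \<times> constr) set" where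
  "collision_branches c = {fst (split_collision c), snd (split_collision c)}"

lemma collision_branch_violated:
  assumes "is_collision n P c" and "(r, k) \<in> collision_branches c"
  shows "r < n" and "\<not> satisfies r (P r) k"
  using assms by (cases c; auto simp: collision_branches_def)+

lemma collision_branch_constrains_only_its_robot:
  assumes "(r, k) \<in> collision_branches c" and "i \<noteq> r"
  shows "satisfies i q k"
  using assms by (cases c) (auto simp: collision_branches_def)

lemma collision_free_satisfies_branch:
  assumes "is_collision n P c" and "collision_free n Q"
  shows "\<exists>(r, k)\<in>collision_branches c. satisfies r (Q r) k"
proof (cases c)
  case (VColl i j v t)
  with assms have "\<not> vertex_collision Q i j t"
    by (auto simp: collision_free_def)
  with assms VColl show ?thesis
    by (auto simp: collision_branches_def vertex_collision_def)
next
  case (EColl i j u v t)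
  with assms have "\<not> edge_collision Q i j t"
    by (auto simp: collision_free_def)
  with assms EColl show ?thesis
    by (auto simp: collision_branches_def edge_collision_def)
qed

text \<open>After time B every robot rests at its own goal, and the goals are distinct.\<close>
lemma coll_time_le_path_costs:
  assumes "is_collision n P c" and "inj_on g {..<n}"
    and "\<forall>i<n. valid_path V (s i) (g i) (P i) \<and> path_cost (g i) (P i) \<le> B"
  shows "coll_time c \<le> B"
proof (rule ccontr)
  assume late: "\<not> coll_time c \<le> B"
  show False
  proof (cases c)
    case (VColl i j v t)
    then have "pos (P i) t = g i" "pos (P j) t = g j"
      using assms late pos_eq_goal_if_cost_le[of V "s i" "g i" "P i" t]
        pos_eq_goal_if_cost_le[of V "s j" "g j" "P j" t] by auto
    with assms(1,2) VColl show False by (auto simp: inj_on_def)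
  next
    case (EColl i j u v t)
    then have "pos (P i) (t - 1) = g i" "pos (P j) t = g j"
      using assms late pos_eq_goal_if_cost_le[of V "s i" "g i" "P i" "t - 1"]
        pos_eq_goal_if_cost_le[of V "s j" "g j" "P j" t] by auto
    with assms(1,2) EColl show False by (auto simp: inj_on_def)
  qed
qed

definition constrs_upto :: "nat \<Rightarrow> vertex set \<Rightarrow> nat \<Rightarrow> constr set" where
  "constrs_upto n V T =
     {VCon r v t |r v t. r < n \<and> v \<in> V \<and> t \<le> T} \<union>
     {ECon r u v t |r u v t. r < n \<and> u \<in> V \<and> v \<in> V \<and> t \<le> T}"

lemma finite_constrs_upto:
  assumes "finite V"
  shows "finite (constrs_upto n V T)"
proof -
  have "constrs_upto n V T =
      (\<lambda>(r, v, t). VCon r v t) ` ({..<n} \<times> V \<times> {..T}) \<union>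
      (\<lambda>(r, u, v, t). ECon r u v t) ` ({..<n} \<times> V \<times> V \<times> {..T})"
    unfolding constrs_upto_def by (auto simp: image_iff)
  with assms show ?thesis by simp
qed

lemma mem_constrs_upto_iff [simp]:
  "VCon r v t \<in> constrs_upto n V T \<longleftrightarrow> r < n \<and> v \<in> V \<and> t \<le> T"
  "ECon r u v t \<in> constrs_upto n V T \<longleftrightarrow> r < n \<and> u \<in> V \<and> v \<in> V \<and> t \<le> T"
  unfolding constrs_upto_def by blast+

lemma collision_branch_mem_constrs_upto:
  assumes "is_collision n P c" and "(r, k) \<in> collision_branches c"
    and "\<forall>i<n. P i \<noteq> [] \<and> set (P i) \<subseteq> V" and "coll_time c \<le> T"
  shows "k \<in> constrs_upto n V T"
proof -
  have "pos (P i) t \<in> V" if "i < n" for i t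
    using assms(3) pos_mem_set that by blast
  with assms show ?thesis
    by (cases c) (auto simp: collision_branches_def)
qed

section \<open>Nodes of OPEN and their children\<close>

definition node_valid :: "vertex set \<Rightarrow> nat \<Rightarrow> (nat \<Rightarrow> vertex) \<Rightarrow> (nat \<Rightarrow> vertex) \<Rightarrow> real \<Rightarrow>
    node \<Rightarrow> bool" where
  "node_valid V n s g w1 N \<longleftrightarrow> (\<forall>i<n. ll_ok V s g w1 i (constrs N) (npaths N i) (nlbs N i))"

definition node_admits :: "nat \<Rightarrow> (nat \<Rightarrow> path) \<Rightarrow> node \<Rightarrow> bool" where
  "node_admits n P N \<longleftrightarrow> (\<forall>i<n. consistent i (P i) (constrs N))"

definition open_inv :: "vertex set \<Rightarrow> nat \<Rightarrow> (nat \<Rightarrow> vertex) \<Rightarrow> (nat \<Rightarrow> vertex) \<Rightarrow> real \<Rightarrow>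
    (nat \<Rightarrow> path) \<Rightarrow> node multiset \<Rightarrow> bool" where
  "open_inv V n s g w1 P Op \<longleftrightarrow>
     (\<forall>N\<in>#Op. node_valid V n s g w1 N) \<and> (\<exists>N\<in>#Op. node_admits n P N)"

lemma node_valid_valid_path:
  "node_valid V n s g w1 N \<Longrightarrow> i < n \<Longrightarrow> valid_path V (s i) (g i) (npaths N i)"
  by (simp add: node_valid_def ll_ok_def)

lemma node_valid_cost_le:
  assumes "node_valid V n s g w1 N"
  shows "real (node_cost n g N) \<le> w1 * node_lb n N"
proof -
  have "real (node_cost n g N) = (\<Sum>i<n. real (path_cost (g i) (npaths N i)))"
    by (simp add: node_cost_def soc_def)
  also have "\<dots> \<le> (\<Sum>i<n. w1 * nlbs N i)"
    using assms by (intro sum_mono) (auto simp: node_valid_def ll_ok_def)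
  also have "\<dots> = w1 * node_lb n N"
    by (simp add: node_lb_def sum_distrib_left)
  finally show ?thesis .
qed

lemma min_lb_le_soc:
  assumes "open_inv V n s g w1 P Op" and "is_solution V n s g P"
  shows "min_lb n Op \<le> real (soc n g P)"
proof -
  obtain N where N: "N \<in># Op" "node_admits n P N"
    using assms(1) by (auto simp: open_inv_def)
  have "min_lb n Op \<le> node_lb n N"
    unfolding min_lb_def using N(1) by (intro Min_le) auto
  also have "\<dots> \<le> (\<Sum>i<n. real (path_cost (g i) (P i)))"
    unfolding node_lb_def
  proof (rule sum_mono)
    fix i assume "i \<in> {..<n}"
    then show "nlbs N i \<le> real (path_cost (g i) (P i))"
      using assms N
      by (auto simp: open_inv_def node_valid_def node_admits_def ll_ok_def is_solution_def)
  qed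
  also have "\<dots> = real (soc n g P)"
    by (simp add: soc_def)
  finally show ?thesis .
qed

lemma selected_exists:
  assumes "Op \<noteq> {#}" and "\<forall>N\<in>#Op. node_valid V n s g w1 N"
  shows "\<exists>N. selected n g w1 Op N"
proof -
  let ?focal = "\<lambda>N. N \<in># Op \<and> real (node_cost n g N) \<le> w1 * min_lb n Op"
  have "min_lb n Op \<in> node_lb n ` set_mset Op"
    unfolding min_lb_def using assms(1) by (intro Min_in) auto
  then obtain N0 where N0: "N0 \<in># Op" "node_lb n N0 = min_lb n Op"
    by auto
  then have "?focal N0"
    using node_valid_cost_le assms(2) by fastforce
  then show ?thesis
    using ex_has_least_nat[of ?focal N0 "\<lambda>N. num_collisions n (npaths N)"]
    by (auto simp: selected_def)
qed

lemma child_result_exists: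
  assumes "1 \<le> w1"
  shows "\<exists>res. child_result V s g w1 N rc res"
proof (cases "\<exists>q. valid_path V (s (fst rc)) (g (fst rc)) q \<and>
                 consistent (fst rc) q (insert (snd rc) (constrs N))")
  case True
  then obtain p lb where "ll_ok V s g w1 (fst rc) (insert (snd rc) (constrs N)) p lb"
    using ll_ok_exists[OF assms] by blast
  then show ?thesis
    unfolding child_result_def Let_def by blast
next
  case False
  then show ?thesis
    unfolding child_result_def Let_def ll_no_path_def by blast
qed

lemma child_result_SomeD:
  assumes "child_result V s g w1 N (r, k) res" and "M \<in># mset_opt res"
  shows "\<exists>p lb. ll_ok V s g w1 r (insert k (constrs N)) p lb \<and>
           M = Node (insert k (constrs N)) ((npaths N)(r := p)) ((nlbs N)(r := lb))"
  using assms by (cases res) (auto simp: child_result_def Let_def mset_opt_def)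

lemma child_node_valid:
  assumes "node_valid V n s g w1 N" and "\<And>i q. i \<noteq> r \<Longrightarrow> satisfies i q k"
    and "child_result V s g w1 N (r, k) res" and "M \<in># mset_opt res"
  shows "node_valid V n s g w1 M"
proof -
  obtain p lb where p: "ll_ok V s g w1 r (insert k (constrs N)) p lb"
    and M: "M = Node (insert k (constrs N)) ((npaths N)(r := p)) ((nlbs N)(r := lb))"
    using child_result_SomeD[OF assms(3,4)] by blast
  show ?thesis
    unfolding node_valid_def
  proof (intro allI impI)
    fix i assume "i < n"
    with assms(1,2) p show "ll_ok V s g w1 i (constrs M) (npaths M i) (nlbs M i)"
      by (cases "i = r") (auto simp: M node_valid_def intro: ll_ok_insert_irrelevant)
  qed
qed

lemma collision_branch_not_in_constrs:
  assumes "node_valid V n s g w1 N" and "is_collision n (npaths N) c"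
    and "(r, k) \<in> collision_branches c"
  shows "k \<notin> constrs N"
proof
  assume "k \<in> constrs N"
  moreover have "r < n" and "\<not> satisfies r (npaths N r) k"
    using collision_branch_violated[OF assms(2,3)] by auto
  ultimately show False
    using assms(1) by (auto simp: node_valid_def ll_ok_def consistent_def)
qed

lemma child_admits:
  assumes "node_admits n P N" and "is_solution V n s g P"
    and "r < n" and "satisfies r (P r) k" and "\<And>i q. i \<noteq> r \<Longrightarrow> satisfies i q k"
    and "child_result V s g w1 N (r, k) res"
  shows "\<exists>M. res = Some M \<and> node_admits n P M"
proof -
  have admits: "\<forall>i<n. consistent i (P i) (insert k (constrs N))"
    using assms(1,4,5) unfolding node_admits_def consistent_def by (metis insert_iff)
  moreover have "valid_path V (s r) (g r) (P r)"
    using assms(2,3) by (simp add: is_solution_def)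
  ultimately have "\<not> ll_no_path V s g r (insert k (constrs N))"
    using assms(3) by (auto simp: ll_no_path_def)
  with assms(6) obtain p lb where
    "res = Some (Node (insert k (constrs N)) ((npaths N)(r := p)) ((nlbs N)(r := lb)))"
    by (auto simp: child_result_def Let_def)
  with admits show ?thesis
    by (simp add: node_admits_def)
qed

lemma child_refines:
  assumes "node_valid V n s g w1 N" and "is_collision n (npaths N) c" and "coll_time c \<le> T"
    and "rc \<in> collision_branches c" and "child_result V s g w1 N rc res" and "M \<in># mset_opt res"
  shows "node_valid V n s g w1 M \<and>
    (\<exists>k\<in>constrs_upto n V T - constrs N. constrs M = insert k (constrs N))"
proof -
  obtain r k where branch: "(r, k) \<in> collision_branches c"
    and res: "child_result V s g w1 N (r, k) res"
    using assms(4,5) by (cases rc) auto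
  have "\<forall>i<n. npaths N i \<noteq> [] \<and> set (npaths N i) \<subseteq> V"
    using node_valid_valid_path[OF assms(1)] by (simp add: valid_path_def)
  then have "k \<in> constrs_upto n V T"
    using collision_branch_mem_constrs_upto[OF assms(2) branch _ assms(3)] by blast
  moreover have "k \<notin> constrs N"
    using collision_branch_not_in_constrs[OF assms(1,2) branch] .
  moreover have "constrs M = insert k (constrs N)"
    using child_result_SomeD[OF res assms(6)] by auto
  moreover have "node_valid V n s g w1 M"
    using child_node_valid[OF assms(1) collision_branch_constrains_only_its_robot[OF branch]
        res assms(6)] .
  ultimately show ?thesis
    by blast
qed

lemma dcbs_step_exists:
  assumes "Op \<noteq> {#}" and "\<forall>N\<in>#Op. node_valid V n s g w1 N" and "1 \<le> w1"
  shows "\<exists>c'. dcbs_step V n s g w1 w2 db (Running Op) c'"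
proof -
  obtain N where N: "selected n g w1 Op N"
    using selected_exists[OF assms(1,2)] by blast
  show ?thesis
  proof (cases "collision_free n (npaths N)")
    case True
    with N show ?thesis
      by (blast intro: ecbs_return)
  next
    case False
    obtain c where "first_collision n (npaths N) c"
      using first_collision_exists[OF False] by blast
    with N False show ?thesis
      using child_result_exists[OF assms(3)] by (blast intro: expand)
  qed
qed

lemma dcbs_step_from_Running: "dcbs_step V n s g w1 w2 db c c' \<Longrightarrow> \<exists>Op. c = Running Op"
  by (cases rule: dcbs_step.cases) auto

lemma dcbs_init_exists:
  assumes "1 \<le> w1" and "is_solution V n s g P"
  shows "\<exists>c0. dcbs_init V n s g w1 c0"
proof -
  have "\<forall>i<n. \<exists>p lb. ll_ok V s g w1 i {} p lb"
    using assms(2) ll_ok_exists[OF assms(1)] by (auto simp: is_solution_def consistent_def)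
  then obtain P0 L where "\<forall>i<n. ll_ok V s g w1 i {} (P0 i) (L i)"
    by metis
  then show ?thesis
    unfolding dcbs_init_def by blast
qed

lemma dcbs_init_open_inv:
  assumes "is_solution V n s g P" and "dcbs_init V n s g w1 c0"
  shows "\<exists>Op. c0 = Running Op \<and> open_inv V n s g w1 P Op"
proof -
  have "\<not> ll_no_path V s g i {}" if "i < n" for i
    using assms(1) that by (auto simp: ll_no_path_def is_solution_def consistent_def)
  with assms(2) obtain P0 L where
    "\<forall>i<n. ll_ok V s g w1 i {} (P0 i) (L i)" and "c0 = Running {#Node {} P0 L#}"
    unfolding dcbs_init_def by blast
  then show ?thesis
    by (auto simp: open_inv_def node_valid_def node_admits_def consistent_def)
qed

section \<open>A termination measure\<close>

definition open_measure :: "constr set \<Rightarrow> node multiset \<Rightarrow> nat" where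
  "open_measure K Op = (\<Sum>N\<in>#Op. 3 ^ card (K - constrs N))"

text \<open>Each child weighs a third of its parent, so replacing a node by at most two
  children strictly decreases the measure.\<close>
lemma open_measure_expand_less:
  assumes "N \<in># Op" and "finite K"
    and children: "\<And>M. M \<in># mset_opt r1 + mset_opt r2 \<Longrightarrow>
                     \<exists>k\<in>K - constrs N. constrs M = insert k (constrs N)"
  shows "open_measure K (Op - {#N#} + mset_opt r1 + mset_opt r2) < open_measure K Op"
proof -
  define w where "w M = (3::nat) ^ card (K - constrs M)" for M
  have third: "3 * w M = w N" if child: "M \<in># mset_opt r1 + mset_opt r2" for M
  proof -
    obtain k where "k \<in> K - constrs N" "constrs M = insert k (constrs N)"
      using children[OF child] by blast
    then have "K - constrs N = insert k (K - constrs M)" "k \<notin> K - constrs M"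
      by auto
    with assms(2) show ?thesis
      by (simp add: w_def)
  qed
  have child_weight: "3 * open_measure K (mset_opt r) \<le> w N"
    if "\<And>M. M \<in># mset_opt r \<Longrightarrow> 3 * w M = w N" for r
    using that by (cases r) (auto simp: open_measure_def mset_opt_def w_def)
  have "open_measure K Op = open_measure K (add_mset N (Op - {#N#}))"
    using assms(1) by simp
  also have "\<dots> = open_measure K (Op - {#N#}) + w N"
    by (simp add: open_measure_def w_def)
  moreover have "open_measure K (Op - {#N#} + mset_opt r1 + mset_opt r2) =
      open_measure K (Op - {#N#}) + open_measure K (mset_opt r1) + open_measure K (mset_opt r2)"
    by (simp add: open_measure_def)
  moreover have "3 * open_measure K (mset_opt r1) \<le> w N" "3 * open_measure K (mset_opt r2) \<le> w N"
    using child_weight third by auto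
  moreover have "0 < w N"
    by (simp add: w_def)
  ultimately show ?thesis
    by linarith
qed

section \<open>DCBS on a solvable instance\<close>

locale dcbs_instance =
  fixes V :: "vertex set" and n :: nat and s g :: "nat \<Rightarrow> vertex" and w1 w2 :: real
    and db :: "(nat \<Rightarrow> path) \<Rightarrow> (nat \<Rightarrow> path) option" and P_opt :: "nat \<Rightarrow> path"
  assumes finite_V: "finite V" and inj_goals: "inj_on g {..<n}"
    and w1_ge_1: "1 \<le> w1" and w1_le_w2: "w1 \<le> w2"
    and db_valid: "\<forall>P Q. db P = Some Q \<longrightarrow> (\<forall>i<n. valid_path V (s i) (g i) (Q i))"
    and P_opt_solution: "is_solution V n s g P_opt"
    and P_opt_optimal: "soc n g P_opt = opt_soc V n s g"
begin

abbreviation step :: "config \<Rightarrow> config \<Rightarrow> bool" where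
  "step \<equiv> dcbs_step V n s g w1 w2 db"

abbreviation invariant :: "node multiset \<Rightarrow> bool" where
  "invariant \<equiv> open_inv V n s g w1 P_opt"

abbreviation bounded_solution :: "(nat \<Rightarrow> path) \<Rightarrow> bool" where
  "bounded_solution Q \<equiv> is_solution V n s g Q \<and> real (soc n g Q) \<le> w2 * real (opt_soc V n s g)"

definition horizon :: nat where
  "horizon = nat \<lceil>w1 * real (opt_soc V n s g)\<rceil>"

abbreviation relevant_constrs :: "constr set" where
  "relevant_constrs \<equiv> constrs_upto n V horizon"

lemma min_lb_le_opt: "invariant Op \<Longrightarrow> min_lb n Op \<le> real (opt_soc V n s g)"
  using min_lb_le_soc[OF _ P_opt_solution] P_opt_optimal by simp

lemma selected_soc_le:
  assumes "invariant Op" and "selected n g w1 Op N"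
  shows "real (soc n g (npaths N)) \<le> w1 * real (opt_soc V n s g)"
proof -
  have "real (soc n g (npaths N)) \<le> w1 * min_lb n Op"
    using assms(2) by (simp add: selected_def node_cost_def)
  also have "\<dots> \<le> w1 * real (opt_soc V n s g)"
    using min_lb_le_opt[OF assms(1)] w1_ge_1 by (intro mult_left_mono) auto
  finally show ?thesis .
qed

lemma selected_node_valid: "invariant Op \<Longrightarrow> selected n g w1 Op N \<Longrightarrow> node_valid V n s g w1 N"
  by (auto simp: open_inv_def selected_def)

lemma collision_time_le_horizon:
  assumes "invariant Op" and "selected n g w1 Op N" and "is_collision n (npaths N) c"
  shows "coll_time c \<le> horizon"
proof -
  have "path_cost (g i) (npaths N i) \<le> horizon" if "i < n" for i
  proof -
    have "path_cost (g i) (npaths N i) \<le> soc n g (npaths N)"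
      unfolding soc_def using that by (intro member_le_sum) auto
    then have "real (path_cost (g i) (npaths N i)) \<le> w1 * real (opt_soc V n s g)"
      using selected_soc_le[OF assms(1,2)] by linarith
    then show ?thesis
      unfolding horizon_def by linarith
  qed
  then show ?thesis
    using coll_time_le_path_costs[OF assms(3) inj_goals]
      node_valid_valid_path[OF selected_node_valid[OF assms(1,2)]] by blast
qed

context
  fixes Op N c r1 r2
  assumes inv: "invariant Op" and sel: "selected n g w1 Op N"
    and first: "first_collision n (npaths N) c"
    and res1: "child_result V s g w1 N (fst (split_collision c)) r1"
    and res2: "child_result V s g w1 N (snd (split_collision c)) r2"
begin

lemma expansion_children_refine:
  assumes "M \<in># mset_opt r1 + mset_opt r2"
  shows "node_valid V n s g w1 M \<and>
    (\<exists>k\<in>relevant_constrs - constrs N. constrs M = insert k (constrs N))"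
proof -
  have coll: "is_collision n (npaths N) c"
    using first by (simp add: first_collision_def)
  note refine = child_refines[OF selected_node_valid[OF inv sel] coll
      collision_time_le_horizon[OF inv sel coll]]
  from assms consider "M \<in># mset_opt r1" | "M \<in># mset_opt r2"
    by auto
  then show ?thesis
  proof cases
    case 1
    then show ?thesis
      using refine[OF _ res1] by (simp add: collision_branches_def)
  next
    case 2
    then show ?thesis
      using refine[OF _ res2] by (simp add: collision_branches_def)
  qed
qed

lemma expansion_measure_less:
  "open_measure relevant_constrs (Op - {#N#} + mset_opt r1 + mset_opt r2)
     < open_measure relevant_constrs Op"
  using sel expansion_children_refine finite_constrs_upto[OF finite_V]
  by (intro open_measure_expand_less) (auto simp: selected_def)

lemma expansion_invariant: "invariant (Op - {#N#} + mset_opt r1 + mset_opt r2)"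
proof -
  have N: "N \<in># Op"
    using sel by (simp add: selected_def)
  obtain N' where N': "N' \<in># Op" "node_admits n P_opt N'"
    using inv by (auto simp: open_inv_def)
  have "\<exists>M\<in>#Op - {#N#} + mset_opt r1 + mset_opt r2. node_admits n P_opt M"
  proof (cases "N' = N")
    case False
    with N N' have "N' \<in># Op - {#N#}"
      by (metis insert_DiffM insert_noteq_member)
    with N' show ?thesis
      by auto
  next
    case True
    have coll: "is_collision n (npaths N) c"
      using first by (simp add: first_collision_def)
    have "\<exists>(r, k)\<in>collision_branches c. satisfies r (P_opt r) k"
      using collision_free_satisfies_branch[OF coll] P_opt_solution by (simp add: is_solution_def)
    then obtain r k where branch: "(r, k) \<in> collision_branches c" and "satisfies r (P_opt r) k"
      by auto
    note admits = child_admits[OF N'(2)[unfolded True] P_opt_solution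
        collision_branch_violated(1)[OF coll branch] this(2)
        collision_branch_constrains_only_its_robot[OF branch]]
    from branch consider "(r, k) = fst (split_collision c)" | "(r, k) = snd (split_collision c)"
      by (auto simp: collision_branches_def)
    then show ?thesis
    proof cases
      case 1
      then obtain M where "r1 = Some M" "node_admits n P_opt M"
        using admits res1 by metis
      then show ?thesis
        by (auto simp: mset_opt_def)
    next
      case 2
      then obtain M where "r2 = Some M" "node_admits n P_opt M"
        using admits res2 by metis
      then show ?thesis
        by (auto simp: mset_opt_def)
    qed
  qed
  moreover have "\<forall>M\<in>#Op - {#N#} + mset_opt r1 + mset_opt r2. node_valid V n s g w1 M"
    using inv expansion_children_refine by (auto simp: open_inv_def dest: in_diffD)
  ultimately show ?thesis
    by (simp add: open_inv_def)
qed

end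

lemma dcbs_step_invariant:
  assumes "invariant Op" and "step (Running Op) c'"
  shows "(\<exists>Q. c' = Returned Q \<and> bounded_solution Q) \<or>
    (\<exists>Op'. c' = Running Op' \<and> invariant Op' \<and>
       open_measure relevant_constrs Op' < open_measure relevant_constrs Op)"
  using assms(2)
proof cases
  case (db_return N Q)
  have "w2 * min_lb n Op \<le> w2 * real (opt_soc V n s g)"
    using min_lb_le_opt[OF assms(1)] w1_ge_1 w1_le_w2 by (intro mult_left_mono) auto
  with db_return db_valid show ?thesis
    by (auto simp: is_solution_def)
next
  case (ecbs_return N)
  have "w1 * real (opt_soc V n s g) \<le> w2 * real (opt_soc V n s g)"
    using w1_le_w2 by (intro mult_right_mono) auto
  with ecbs_return selected_soc_le[OF assms(1)]
    node_valid_valid_path[OF selected_node_valid[OF assms(1)]]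
  show ?thesis
    by (fastforce simp: is_solution_def)
next
  case (expand N c r1 r2)
  then show ?thesis
    using expansion_invariant[OF assms(1)] expansion_measure_less[OF assms(1)] by blast
next
  case fail
  with assms(1) show ?thesis
    by (simp add: open_inv_def)
qed

lemma invariant_step_exists: "invariant Op \<Longrightarrow> \<exists>c'. step (Running Op) c'"
  using dcbs_step_exists[OF _ _ w1_ge_1, of Op V n s g w2 db] by (force simp: open_inv_def)

lemma reachable_invariant:
  assumes "dcbs_init V n s g w1 c0" and "step\<^sup>*\<^sup>* c0 c"
  shows "(\<exists>Op. c = Running Op \<and> invariant Op) \<or> (\<exists>Q. c = Returned Q \<and> bounded_solution Q)"
  using assms(2)
proof (induction rule: rtranclp_induct)
  case base
  then show ?case
    using dcbs_init_open_inv[OF P_opt_solution assms(1)] by blast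
next
  case (step c c')
  then obtain Op where "c = Running Op" "invariant Op"
    using dcbs_step_from_Running by blast
  with step.hyps(2) show ?case
    using dcbs_step_invariant by blast
qed

lemma no_infinite_run: "\<not> (\<exists>f. dcbs_init V n s g w1 (f 0) \<and> (\<forall>k. step (f k) (f (Suc k))))"
proof
  assume "\<exists>f. dcbs_init V n s g w1 (f 0) \<and> (\<forall>k. step (f k) (f (Suc k)))"
  then obtain f where f0: "dcbs_init V n s g w1 (f 0)" and run: "\<And>k. step (f k) (f (Suc k))"
    by blast
  obtain Op0 where Op0: "f 0 = Running Op0" "invariant Op0"
    using dcbs_init_open_inv[OF P_opt_solution f0] by blast
  let ?\<mu> = "open_measure relevant_constrs"
  have "\<exists>Op. f k = Running Op \<and> invariant Op \<and> ?\<mu> Op + k \<le> ?\<mu> Op0" for k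
  proof (induction k)
    case 0
    with Op0 show ?case
      by auto
  next
    case (Suc k)
    then obtain Op where Op: "f k = Running Op" "invariant Op" "?\<mu> Op + k \<le> ?\<mu> Op0"
      by blast
    obtain Op' where "f (Suc k) = Running Op'"
      using dcbs_step_from_Running[OF run[of "Suc k"]] by blast
    with dcbs_step_invariant[OF Op(2)] run[of k] Op show ?case
      by fastforce
  qed
  from this[of "Suc (?\<mu> Op0)"] show False
    by auto
qed

end

theorem mainTheorem1:
  fixes V :: "vertex set" and n :: nat and s g :: "nat \<Rightarrow> vertex" and w1 w2 :: real
    and db :: "(nat \<Rightarrow> path) \<Rightarrow> (nat \<Rightarrow> path) option"
  assumes "finite V"
    and "\<forall>i<n. s i \<in> V" and "\<forall>i<n. g i \<in> V"
    and "inj_on s {..<n}" and "inj_on g {..<n}"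
    and "1 \<le> w1" and "w1 < w2"
    and "\<forall>P Q. db P = Some Q \<longrightarrow> (\<forall>i<n. valid_path V (s i) (g i) (Q i))"
    and "\<exists>P. is_solution V n s g P"
  shows "(\<exists>c0. dcbs_init V n s g w1 c0)
    \<and> \<not> (\<exists>f. dcbs_init V n s g w1 (f 0) \<and> (\<forall>k. dcbs_step V n s g w1 w2 db (f k) (f (Suc k))))
    \<and> (\<forall>c0 c. dcbs_init V n s g w1 c0 \<longrightarrow> (dcbs_step V n s g w1 w2 db)\<^sup>*\<^sup>* c0 c \<longrightarrow>
          (\<exists>c'. dcbs_step V n s g w1 w2 db c c') \<or>
          (\<exists>P. c = Returned P \<and> is_solution V n s g P \<and>
               real (soc n g P) \<le> w2 * real (opt_soc V n s g)))"
proof -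
  obtain P_opt where P_opt: "is_solution V n s g P_opt" "soc n g P_opt = opt_soc V n s g"
    using opt_soc_attained[OF assms(9)] by blast
  interpret dcbs_instance V n s g w1 w2 db P_opt
    using assms P_opt by unfold_locales auto
  have "(\<exists>c'. step c c') \<or> (\<exists>Q. c = Returned Q \<and> bounded_solution Q)"
    if "dcbs_init V n s g w1 c0" and "step\<^sup>*\<^sup>* c0 c" for c0 c
    using reachable_invariant[OF that] invariant_step_exists by blast
  then show ?thesis
    using dcbs_init_exists[OF assms(6) P_opt(1)] no_infinite_run by blast
qed

end
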